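(* Consider the following process on a finite vertex set $V=\{1,\dots,p\}$. One maintains an ordered list of cliques $[C_1,\dots,C_m]$, a forest $\mathcal{T}$ whose nodes are the cliques in the list and whose edges are labelled by separators, and a set of outstanding vertices $O=V\setminus\bigcup_i C_i$; the associated graph $G$ on $V$ has an edge between two distinct vertices iff they lie in a common $C_i$. Initially the list is a given list of nonempty subsets, arranged as a perfect sequence of sets, together with a forest on them that is a clique forest of the graph they induce (for instance a single nonempty subset with no edges). While $O\ne\emptyset$, a step chooses a clique $C_a$ in the list, a vertex $v\in O$ and a subset $S\subseteq C_a$, and then: if $S$ is a nonempty proper subset of $C_a$, the clique $C_b=S\cup\{v\}$ is appended to the list and an edge between $C_a$ and $C_b$ labelled $S$ is added to $\mathcal{T}$; if $S=C_a$, the node $C_a$ is replaced by $C_a\cup\{v\}$ (keeping its incident edges) and no edge is added; if $S=\emptyset$, the clique $\{v\}$ is appended as a new isolated node of $\mathcal{T}$; finally $v$ is removed from $O$. Then, for any such sequence of choices, the forest $\mathcal{T}$ obtained at termination is a clique forest of the final graph $G$.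
   Context: A clique of a graph is a maximal complete vertex subset. The clique (intersection) graph of $G$ has the cliques of $G$ as nodes and an edge between two cliques whenever they intersect. A clique forest of $G$ is an acyclic spanning subgraph of the clique graph (a spanning forest on the cliques) satisfying the clique-intersection property: for any two cliques $C_1,C_2$ in the same tree, $C_1\cap C_2$ is contained in every clique on the path between $C_1$ and $C_2$. A perfect sequence of sets is an ordering $[C_1,\dots,C_m]$ such that for every $i\ge2$ there is $j<i$ with $C_i\cap(C_1\cup\dots\cup C_{i-1})\subseteq C_j$, and each such intersection is complete in $G$. *)

theory Defs
  imports Main
begin

definition gverts :: "'a set list \<Rightarrow> 'a set" where
  "gverts Cs = \<Union> (set Cs)"

definition gadj :: "'a set list \<Rightarrow> 'a \<Rightarrow> 'a \<Rightarrow> bool" where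
  "gadj Cs u v \<longleftrightarrow> u \<noteq> v \<and> (\<exists>C\<in>set Cs. u \<in> C \<and> v \<in> C)"

definition complete_in :: "'a set list \<Rightarrow> 'a set \<Rightarrow> bool" where
  "complete_in Cs K \<longleftrightarrow> K \<subseteq> gverts Cs \<and> (\<forall>u\<in>K. \<forall>v\<in>K. u \<noteq> v \<longrightarrow> gadj Cs u v)"

definition is_clique :: "'a set list \<Rightarrow> 'a set \<Rightarrow> bool" where
  "is_clique Cs K \<longleftrightarrow> complete_in Cs K \<and> (\<forall>K'. complete_in Cs K' \<and> K \<subseteq> K' \<longrightarrow> K' = K)"

(* Forests on the nodes {0..<length Cs} (node i is the clique Cs!i);
   undirected edges are 2-element sets of indices. *)
definition epath :: "nat set set \<Rightarrow> nat list \<Rightarrow> bool" where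
  "epath E xs \<longleftrightarrow> xs \<noteq> [] \<and> distinct xs \<and>
     (\<forall>i. Suc i < length xs \<longrightarrow> {xs ! i, xs ! Suc i} \<in> E)"

definition acyclic_edges :: "nat set set \<Rightarrow> bool" where
  "acyclic_edges E \<longleftrightarrow> (\<forall>xs. epath E xs \<and> length xs \<ge> 3 \<longrightarrow> {last xs, hd xs} \<notin> E)"

definition clique_forest :: "'a set list \<Rightarrow> nat set set \<Rightarrow> bool" where
  "clique_forest Cs E \<longleftrightarrow>
     \<comment> \<open>the nodes are exactly the cliques of the graph, each once\<close>
     distinct Cs \<and> set Cs = {K. is_clique Cs K} \<and>
     \<comment> \<open>edges are edges of the clique intersection graph\<close>
     (\<forall>e\<in>E. \<exists>i j. e = {i, j} \<and> i \<noteq> j \<and> i < length Cs \<and> j < length Cs \<and>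
                   Cs ! i \<inter> Cs ! j \<noteq> {}) \<and>
     acyclic_edges E \<and>
     \<comment> \<open>clique-intersection property\<close>
     (\<forall>xs. epath E xs \<longrightarrow> (\<forall>k\<in>set xs. Cs ! hd xs \<inter> Cs ! last xs \<subseteq> Cs ! k))"

definition perfect_sequence :: "'a set list \<Rightarrow> bool" where
  "perfect_sequence Cs \<longleftrightarrow>
     (\<forall>i. 0 < i \<and> i < length Cs \<longrightarrow>
        (\<exists>j<i. Cs ! i \<inter> (\<Union>k<i. Cs ! k) \<subseteq> Cs ! j) \<and>
        complete_in Cs (Cs ! i \<inter> (\<Union>k<i. Cs ! k)))"

(* One step of the process on V = {1..p}; the outstanding set is
   O = V - union of the cliques. *)
inductive step :: "nat \<Rightarrow> nat set list \<times> nat set set \<Rightarrow> nat set list \<times> nat set set \<Rightarrow> bool"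
  for p :: nat where
  proper: "\<lbrakk> a < length Cs; v \<in> {1..p} - \<Union>(set Cs); S \<noteq> {}; S \<subset> Cs ! a \<rbrakk>
     \<Longrightarrow> step p (Cs, E) (Cs @ [S \<union> {v}], insert {a, length Cs} E)"
  \<comment> \<open>case S = C_a\<close>
| full: "\<lbrakk> a < length Cs; v \<in> {1..p} - \<Union>(set Cs) \<rbrakk>
     \<Longrightarrow> step p (Cs, E) (Cs[a := Cs ! a \<union> {v}], E)"
  \<comment> \<open>case S = {}\<close>
| empty: "\<lbrakk> a < length Cs; v \<in> {1..p} - \<Union>(set Cs) \<rbrakk>
     \<Longrightarrow> step p (Cs, E) (Cs @ [{v}], E)"

end

theory Submission
  imports Defs
begin

(* Every step preserves the invariant "the node list is a clique forest of the graph it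
   induces, and no node is empty".  The new vertex v is adjacent exactly to the vertices of S,
   so S \<union> {v} is a new maximal clique, while every old clique stays maximal except C_a when
   S = C_a, where it is absorbed into C_a \<union> {v}.  Old nodes only grow and their pairwise
   intersections do not change, so the old edges and the clique-intersection property survive.
   In the proper case the new node is a leaf attached to C_a that meets every other node inside
   S \<subseteq> C_a, which is what the clique-intersection property needs along paths through the
   leaf. *)

lemma gverts_append: "gverts (Cs @ [X]) = gverts Cs \<union> X"
  by (auto simp: gverts_def)

lemma gadj_append: "gadj (Cs @ [X]) u w \<longleftrightarrow> gadj Cs u w \<or> (u \<noteq> w \<and> u \<in> X \<and> w \<in> X)"
  by (auto simp: gadj_def)

lemma gadj_in_gverts: "gadj Cs u w \<Longrightarrow> u \<in> gverts Cs \<and> w \<in> gverts Cs"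
  by (auto simp: gadj_def gverts_def)

lemma complete_in_member: "C \<in> set Cs \<Longrightarrow> complete_in Cs C"
  unfolding complete_in_def gverts_def gadj_def by blast

lemma complete_in_subset: "complete_in Cs K \<Longrightarrow> T \<subseteq> K \<Longrightarrow> complete_in Cs T"
  unfolding complete_in_def by blast

lemma complete_in_append_new_vertex:
  assumes v: "v \<notin> gverts Cs" and T: "complete_in Cs T"
  shows "complete_in (Cs @ [T \<union> {v}]) K \<longleftrightarrow>
           (v \<notin> K \<and> complete_in Cs K) \<or> (v \<in> K \<and> K \<subseteq> T \<union> {v})"
proof (cases "v \<in> K")
  case True
  have "K \<subseteq> T \<union> {v}" if "complete_in (Cs @ [T \<union> {v}]) K"
    using that True v unfolding complete_in_def gadj_append by (blast dest: gadj_in_gverts)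
  then show ?thesis
    using True T unfolding complete_in_def gverts_append gadj_append by blast
next
  case False
  then show ?thesis
    using T unfolding complete_in_def gverts_append gadj_append by blast
qed

lemma is_clique_subset_complete: "is_clique Cs K \<Longrightarrow> complete_in Cs C \<Longrightarrow> K \<subseteq> C \<Longrightarrow> C = K"
  unfolding is_clique_def by blast

lemma is_clique_append_new_vertex:
  assumes v: "v \<notin> gverts Cs" and T: "complete_in Cs T"
  shows "is_clique (Cs @ [T \<union> {v}]) K \<longleftrightarrow> K = T \<union> {v} \<or> (is_clique Cs K \<and> \<not> K \<subseteq> T)"
    (is "is_clique ?Cs' K \<longleftrightarrow> _")
proof
  note complete' = complete_in_append_new_vertex[OF v T]
  have fresh: "v \<notin> K'" if "complete_in Cs K'" for K'
    using that v unfolding complete_in_def by blast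
  show "is_clique ?Cs' K" if "K = T \<union> {v} \<or> (is_clique Cs K \<and> \<not> K \<subseteq> T)"
    using that
  proof
    assume "K = T \<union> {v}"
    then show ?thesis using complete' unfolding is_clique_def by blast
  next
    assume K: "is_clique Cs K \<and> \<not> K \<subseteq> T"
    then have "v \<notin> K" using fresh unfolding is_clique_def by blast
    then show ?thesis using K complete' unfolding is_clique_def by blast
  qed
  show "K = T \<union> {v} \<or> (is_clique Cs K \<and> \<not> K \<subseteq> T)" if K: "is_clique ?Cs' K"
  proof (cases "v \<in> K")
    case True
    then show ?thesis using K complete' unfolding is_clique_def by blast
  next
    case False
    then have "is_clique Cs K" using K fresh complete' unfolding is_clique_def by blast
    moreover have "\<not> K \<subseteq> T"
    proof
      assume "K \<subseteq> T"
      then have "complete_in ?Cs' (insert v K)" using complete' by blast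
      then show False using K False unfolding is_clique_def by blast
    qed
    ultimately show ?thesis by blast
  qed
qed

lemma cliques_append_new_vertex:
  assumes cliques: "set Cs = {K. is_clique Cs K}" and v: "v \<notin> \<Union>(set Cs)"
    and T: "T \<subseteq> C" "C \<in> set Cs"
  shows "{K. is_clique (Cs @ [T \<union> {v}]) K} = insert (T \<union> {v}) {K \<in> set Cs. \<not> K \<subseteq> T}"
proof -
  have "complete_in Cs T" using complete_in_subset[OF complete_in_member[OF T(2)] T(1)] .
  then show ?thesis
    using is_clique_append_new_vertex[of v Cs T] v cliques unfolding gverts_def by auto
qed

lemma is_clique_cong_cover:
  assumes "\<forall>Y\<in>set A. \<exists>Z\<in>set B. Y \<subseteq> Z" and "\<forall>Z\<in>set B. \<exists>Y\<in>set A. Z \<subseteq> Y"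
  shows "is_clique A = is_clique B"
proof -
  have "gverts A = gverts B"
    unfolding gverts_def using assms by (meson Union_least Union_upper subset_antisym subset_trans)
  moreover have "gadj A u w = gadj B u w" for u w
    unfolding gadj_def using assms by (meson subsetD)
  ultimately show ?thesis unfolding is_clique_def complete_in_def by simp
qed

lemma is_clique_list_update_superset:
  assumes a: "a < length Cs" and X: "Cs ! a \<subseteq> X"
  shows "is_clique (Cs[a := X]) = is_clique (Cs @ [X])"
proof (rule is_clique_cong_cover)
  have "Y \<in> set (Cs[a := X])" if "Y \<in> set Cs" "Y \<noteq> Cs ! a" for Y
    using that by (metis in_set_conv_nth length_list_update nth_list_update_neq)
  then show "\<forall>Y\<in>set (Cs @ [X]). \<exists>Z\<in>set (Cs[a := X]). Y \<subseteq> Z"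
    using X set_update_memI[OF a, of X] by (metis Un_iff empty_iff list.set(1,2) set_append insert_iff order_refl)
  show "\<forall>Z\<in>set (Cs[a := X]). \<exists>Y\<in>set (Cs @ [X]). Z \<subseteq> Y"
    using set_update_subset_insert[of Cs a X] by auto
qed

lemma epath_Nil [simp]: "\<not> epath E []"
  by (simp add: epath_def)

lemma epath_singleton [simp]: "epath E [x]"
  by (simp add: epath_def)

lemma epath_Cons_Cons:
  "epath E (x # y # zs) \<longleftrightarrow> {x, y} \<in> E \<and> x \<notin> set (y # zs) \<and> epath E (y # zs)"
  unfolding epath_def by (auto simp: nth_Cons split: nat.splits)

lemma epath_subset_edges:
  assumes "epath E xs" "2 \<le> length xs"
  shows "set xs \<subseteq> \<Union>E"
  using assms
proof (induction xs rule: induct_list012)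
  case (3 x y zs)
  then show ?case by (cases zs) (auto simp: epath_Cons_Cons)
qed auto

lemma epath_hd_neq_last: "epath E xs \<Longrightarrow> 2 \<le> length xs \<Longrightarrow> hd xs \<noteq> last xs"
  by (induction xs rule: induct_list012) (auto simp: epath_Cons_Cons)

lemma epath_short:
  assumes "epath E xs" "\<not> 2 \<le> length xs"
  obtains x where "xs = [x]"
  using assms by (cases xs) (auto simp: Suc_le_eq)

lemma epath_rev: "epath E xs \<Longrightarrow> epath E (rev xs)"
  unfolding epath_def
proof (elim conjE, intro conjI allI impI)
  fix i assume edges: "\<forall>i. Suc i < length xs \<longrightarrow> {xs ! i, xs ! Suc i} \<in> E"
    and i: "Suc i < length (rev xs)"
  define j where "j = length xs - Suc (Suc i)"
  have "Suc j < length xs" "rev xs ! i = xs ! Suc j" "rev xs ! Suc i = xs ! j"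
    using i by (auto simp: rev_nth j_def Suc_diff_Suc)
  then show "{rev xs ! i, rev xs ! Suc i} \<in> E" using edges by (metis insert_commute)
qed auto

lemma epath_insert_edge_avoiding:
  "epath (insert {a, n} E) xs \<Longrightarrow> n \<notin> set xs \<Longrightarrow> epath E xs"
  by (induction xs rule: induct_list012) (auto simp: epath_Cons_Cons doubleton_eq_iff)

lemma insert_leaf_edge_neighbour:
  "{n, x} \<in> insert {a, n} E \<Longrightarrow> n \<notin> \<Union>E \<Longrightarrow> x = a"
  by (auto simp: doubleton_eq_iff)

lemma epath_insert_leaf_end:
  assumes "epath (insert {a, n} E) xs" "n \<notin> \<Union>E" "n \<in> set xs"
  shows "hd xs = n \<or> last xs = n"
  using assms
proof (induction xs rule: induct_list012)
  case (3 x y zs)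
  show ?case
  proof (cases "x = n")
    case False
    then have "y = n \<or> last (y # zs) = n"
      using 3 by (auto simp: epath_Cons_Cons)
    moreover have False if "y = n" "zs = z # zs'" for z zs'
    proof -
      have "x = a" "z = a"
        using 3(3,4) that by (auto simp: epath_Cons_Cons insert_commute dest: insert_leaf_edge_neighbour)
      then show False using 3(3) that by (auto simp: epath_Cons_Cons)
    qed
    ultimately show ?thesis by (cases zs) auto
  qed simp
qed auto

lemma epath_through_leaf:
  assumes path: "epath (insert {a, n} E) xs" and leaf: "n \<notin> \<Union>E"
    and n: "n \<in> set xs" and len: "2 \<le> length xs"
  obtains ys where "epath E ys" "hd ys = a" "n \<notin> set ys" "set xs = insert n (set ys)"
    "length xs = Suc (length ys)" "{hd xs, last xs} = {n, last ys}"
proof -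
  obtain zs where zs: "epath (insert {a, n} E) zs" "hd zs = n" "set zs = set xs"
    "length zs = length xs" "{hd zs, last zs} = {hd xs, last xs}"
  proof (cases "hd xs = n")
    case False
    then have "last xs = n" using epath_insert_leaf_end[OF path leaf n] by blast
    then show ?thesis
      using that[of "rev xs"] epath_rev[OF path] by (simp add: hd_rev last_rev insert_commute)
  qed (use that path in blast)
  then obtain y ys where zs_eq: "zs = n # y # ys" using len by (cases zs; cases "tl zs") auto
  then have edge: "{n, y} \<in> insert {a, n} E" and fresh: "n \<notin> set (y # ys)"
    and tail: "epath (insert {a, n} E) (y # ys)"
    using zs(1) by (simp_all add: epath_Cons_Cons)
  show ?thesis
  proof (rule that)
    show "epath E (y # ys)" using epath_insert_edge_avoiding[OF tail fresh] .
    show "hd (y # ys) = a" using insert_leaf_edge_neighbour[OF edge leaf] by simp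
    show "n \<notin> set (y # ys)" by (fact fresh)
  qed (use zs zs_eq in auto)
qed

lemma acyclic_edges_insert_leaf:
  assumes acyclic: "acyclic_edges E" and leaf: "n \<notin> \<Union>E"
  shows "acyclic_edges (insert {a, n} E)"
  unfolding acyclic_edges_def
proof (intro allI impI notI, elim conjE)
  fix xs assume path: "epath (insert {a, n} E) xs" and len: "3 \<le> length xs"
    and closing: "{last xs, hd xs} \<in> insert {a, n} E"
  show False
  proof (cases "n \<in> set xs")
    case True
    have "2 \<le> length xs" using len by simp
    then obtain ys where ys: "epath E ys" "hd ys = a" "n \<notin> set ys" "set xs = insert n (set ys)"
      "length xs = Suc (length ys)" "{hd xs, last xs} = {n, last ys}"
      by (rule epath_through_leaf[OF path leaf True])
    then have "{n, last ys} \<in> insert {a, n} E" using closing by (simp add: insert_commute)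
    then have "last ys = hd ys" using ys(2) insert_leaf_edge_neighbour[OF _ leaf] by simp
    moreover have "2 \<le> length ys" using len ys(5) by simp
    ultimately show False using epath_hd_neq_last[OF ys(1)] by simp
  next
    case False
    have "hd xs \<in> set xs" "last xs \<in> set xs" using len by (auto intro: hd_in_set last_in_set)
    then have "{last xs, hd xs} \<noteq> {a, n}" using False by (auto simp: doubleton_eq_iff)
    moreover have "epath E xs" using epath_insert_edge_avoiding[OF path False] .
    ultimately show False using acyclic closing len unfolding acyclic_edges_def by blast
  qed
qed

lemma
  assumes "clique_forest Cs E"
  shows clique_forest_distinct: "distinct Cs"
    and clique_forest_cliques: "set Cs = {K. is_clique Cs K}"
    and clique_forest_edge: "e \<in> E \<Longrightarrow>
          \<exists>i j. e = {i, j} \<and> i \<noteq> j \<and> i < length Cs \<and> j < length Cs \<and> Cs ! i \<inter> Cs ! j \<noteq> {}"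
    and clique_forest_acyclic: "acyclic_edges E"
    and clique_forest_running: "epath E xs \<Longrightarrow> k \<in> set xs \<Longrightarrow> Cs ! hd xs \<inter> Cs ! last xs \<subseteq> Cs ! k"
  using assms unfolding clique_forest_def by (elim conjE; blast)+

lemma clique_forestI:
  assumes "distinct Cs" "set Cs = {K. is_clique Cs K}"
    and "\<And>e. e \<in> E \<Longrightarrow>
          \<exists>i j. e = {i, j} \<and> i \<noteq> j \<and> i < length Cs \<and> j < length Cs \<and> Cs ! i \<inter> Cs ! j \<noteq> {}"
    and "acyclic_edges E"
    and "\<And>xs k. epath E xs \<Longrightarrow> k \<in> set xs \<Longrightarrow> Cs ! hd xs \<inter> Cs ! last xs \<subseteq> Cs ! k"
  shows "clique_forest Cs E"
  using assms unfolding clique_forest_def by blast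

lemma clique_forest_edges_in_range: "clique_forest Cs E \<Longrightarrow> \<Union>E \<subseteq> {..<length Cs}"
  by (fastforce dest: clique_forest_edge)

lemma clique_forest_epath_in_range:
  assumes cf: "clique_forest Cs E" and path: "epath E xs" and "hd xs < length Cs"
  shows "set xs \<subseteq> {..<length Cs}"
proof (cases "2 \<le> length xs")
  case True
  then show ?thesis using epath_subset_edges[OF path] clique_forest_edges_in_range[OF cf] by blast
next
  case False
  then obtain x where "xs = [x]" using epath_short[OF path] by blast
  then show ?thesis using assms(3) by simp
qed

lemma clique_forest_grow_nodes:
  assumes cf: "clique_forest Cs E"
    and nodes: "distinct Cs'" "set Cs' = {K. is_clique Cs' K}"
    and len: "length Cs \<le> length Cs'"
    and grow: "\<And>i. i < length Cs \<Longrightarrow> Cs ! i \<subseteq> Cs' ! i"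
    and meet: "\<And>i j. i < length Cs \<Longrightarrow> j < length Cs \<Longrightarrow> i \<noteq> j \<Longrightarrow>
                 Cs' ! i \<inter> Cs' ! j \<subseteq> Cs ! i \<inter> Cs ! j"
  shows "clique_forest Cs' E"
proof (rule clique_forestI[OF nodes _ clique_forest_acyclic[OF cf]])
  fix e assume "e \<in> E"
  then obtain i j where ij: "e = {i, j}" "i \<noteq> j" "i < length Cs" "j < length Cs" "Cs ! i \<inter> Cs ! j \<noteq> {}"
    using clique_forest_edge[OF cf] by blast
  moreover have "i < length Cs'" "j < length Cs'" using ij len by simp_all
  moreover have "Cs' ! i \<inter> Cs' ! j \<noteq> {}" using ij grow by blast
  ultimately show "\<exists>i j. e = {i, j} \<and> i \<noteq> j \<and> i < length Cs' \<and> j < length Cs' \<and> Cs' ! i \<inter> Cs' ! j \<noteq> {}"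
    by blast
next
  fix xs k assume path: "epath E xs" and k: "k \<in> set xs"
  show "Cs' ! hd xs \<inter> Cs' ! last xs \<subseteq> Cs' ! k"
  proof (cases "2 \<le> length xs")
    case True
    have in_range: "set xs \<subseteq> {..<length Cs}"
      using epath_subset_edges[OF path True] clique_forest_edges_in_range[OF cf] by blast
    have "xs \<noteq> []" using path by auto
    then have "Cs' ! hd xs \<inter> Cs' ! last xs \<subseteq> Cs ! hd xs \<inter> Cs ! last xs"
      using meet epath_hd_neq_last[OF path True] in_range hd_in_set last_in_set by blast
    also have "\<dots> \<subseteq> Cs ! k" using clique_forest_running[OF cf path k] .
    also have "\<dots> \<subseteq> Cs' ! k" using grow k in_range by blast
    finally show ?thesis .
  next
    case False
    then obtain x where "xs = [x]" using epath_short[OF path] by blast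
    then show ?thesis using k by simp
  qed
qed

lemma clique_forest_insert_leaf:
  assumes cf: "clique_forest Cs E"
    and a: "a < length Cs" and n: "n < length Cs" "a \<noteq> n" and leaf: "n \<notin> \<Union>E"
    and meet: "Cs ! a \<inter> Cs ! n \<noteq> {}"
    and separator: "\<And>k. k < length Cs \<Longrightarrow> k \<noteq> n \<Longrightarrow> Cs ! n \<inter> Cs ! k \<subseteq> Cs ! a"
  shows "clique_forest Cs (insert {a, n} E)"
proof (rule clique_forestI[OF clique_forest_distinct[OF cf] clique_forest_cliques[OF cf]])
  fix e assume "e \<in> insert {a, n} E"
  then show "\<exists>i j. e = {i, j} \<and> i \<noteq> j \<and> i < length Cs \<and> j < length Cs \<and> Cs ! i \<inter> Cs ! j \<noteq> {}"
    using clique_forest_edge[OF cf] a n meet by blast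
next
  show "acyclic_edges (insert {a, n} E)"
    using acyclic_edges_insert_leaf[OF clique_forest_acyclic[OF cf] leaf] .
next
  fix xs k assume path: "epath (insert {a, n} E) xs" and k: "k \<in> set xs"
  show "Cs ! hd xs \<inter> Cs ! last xs \<subseteq> Cs ! k"
  proof (cases "n \<in> set xs \<and> 2 \<le> length xs")
    case True
    then obtain ys where ys: "epath E ys" "hd ys = a" "n \<notin> set ys" "set xs = insert n (set ys)"
      "length xs = Suc (length ys)" "{hd xs, last xs} = {n, last ys}"
      using epath_through_leaf[OF path leaf] by blast
    have ys_range: "set ys \<subseteq> {..<length Cs}"
      using clique_forest_epath_in_range[OF cf ys(1)] ys(2) a by simp
    have "ys \<noteq> []" using ys(1) by auto
    then have last_ys: "last ys < length Cs" "last ys \<noteq> n"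
      using ys_range ys(3) last_in_set by blast+
    have ends: "Cs ! hd xs \<inter> Cs ! last xs = Cs ! n \<inter> Cs ! last ys"
      using ys(6) by (auto simp: doubleton_eq_iff)
    show ?thesis
    proof (cases "k = n")
      case False
      then have "k \<in> set ys" using k ys(4) by blast
      have "Cs ! n \<inter> Cs ! last ys \<subseteq> Cs ! hd ys \<inter> Cs ! last ys"
        using separator[OF last_ys] ys(2) by blast
      also have "\<dots> \<subseteq> Cs ! k" using clique_forest_running[OF cf ys(1) \<open>k \<in> set ys\<close>] .
      finally show ?thesis unfolding ends .
    qed (use ends in blast)
  next
    case False
    then consider "n \<notin> set xs" | "\<not> 2 \<le> length xs" by blast
    then show ?thesis
    proof cases
      case 1
      show ?thesis using clique_forest_running[OF cf epath_insert_edge_avoiding[OF path 1] k] .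
    next
      case 2
      then obtain x where "xs = [x]" using epath_short[OF path] by blast
      then show ?thesis using k by simp
    qed
  qed
qed

lemma clique_forest_append_new_vertex:
  assumes cf: "clique_forest Cs E" and v: "v \<notin> \<Union>(set Cs)" and T: "T \<subset> C" "C \<in> set Cs"
  shows "clique_forest (Cs @ [T \<union> {v}]) E"
proof (rule clique_forest_grow_nodes[OF cf])
  have cliques: "set Cs = {K. is_clique Cs K}" using clique_forest_cliques[OF cf] .
  have "\<not> K \<subseteq> T" if "K \<in> set Cs" for K
    using that T cliques is_clique_subset_complete[OF _ complete_in_member[OF T(2)]] by blast
  then show "set (Cs @ [T \<union> {v}]) = {K. is_clique (Cs @ [T \<union> {v}]) K}"
    using cliques_append_new_vertex[OF cliques v _ T(2), of T] T(1) by auto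
  show "distinct (Cs @ [T \<union> {v}])" using clique_forest_distinct[OF cf] v by auto
qed (auto simp: nth_append)

lemma clique_forest_update_new_vertex:
  assumes cf: "clique_forest Cs E" and v: "v \<notin> \<Union>(set Cs)" and a: "a < length Cs"
  shows "clique_forest (Cs[a := Cs ! a \<union> {v}]) E"
proof (rule clique_forest_grow_nodes[OF cf])
  let ?X = "Cs ! a \<union> {v}"
  have cliques: "set Cs = {K. is_clique Cs K}" and distinct: "distinct Cs"
    using clique_forest_cliques[OF cf] clique_forest_distinct[OF cf] .
  have "{K \<in> set Cs. \<not> K \<subseteq> Cs ! a} = set Cs - {Cs ! a}"
    using cliques is_clique_subset_complete[OF _ complete_in_member[OF nth_mem[OF a]]] by auto
  then have "{K. is_clique (Cs[a := ?X]) K} = insert ?X (set Cs - {Cs ! a})"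
    unfolding is_clique_list_update_superset[OF a Un_upper1]
    using cliques_append_new_vertex[OF cliques v order_refl nth_mem[OF a]] by simp
  then show "set (Cs[a := ?X]) = {K. is_clique (Cs[a := ?X]) K}"
    using set_update_distinct[OF distinct a] by simp
  have "?X \<notin> set Cs" using v by blast
  then show "distinct (Cs[a := ?X])" using distinct_list_update[OF distinct] by blast
  have fresh: "v \<notin> Cs ! i" if "i < length Cs" for i using v that by auto
  show "Cs[a := ?X] ! i \<inter> Cs[a := ?X] ! j \<subseteq> Cs ! i \<inter> Cs ! j"
    if "i < length Cs" "j < length Cs" "i \<noteq> j" for i j
    using that fresh[of i] fresh[of j] by (cases "i = a"; cases "j = a") auto
  show "Cs ! i \<subseteq> Cs[a := ?X] ! i" if "i < length Cs" for i
    using that by (cases "i = a") auto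
qed simp

lemma step_preserves_clique_forest:
  assumes "step p (Cs, E) (Cs', E')" and cf: "clique_forest Cs E" and nonempty: "{} \<notin> set Cs"
  shows "clique_forest Cs' E' \<and> {} \<notin> set Cs'"
  using assms(1)
proof cases
  case (proper a v S)
  let ?Cs = "Cs @ [S \<union> {v}]"
  have v: "v \<notin> \<Union>(set Cs)" using proper(4) by blast
  have "clique_forest ?Cs E"
    using clique_forest_append_new_vertex[OF cf v proper(6) nth_mem[OF proper(3)]] .
  then have "clique_forest ?Cs (insert {a, length Cs} E)"
  proof (rule clique_forest_insert_leaf)
    show "length Cs \<notin> \<Union>E" using clique_forest_edges_in_range[OF cf] by blast
    show "?Cs ! a \<inter> ?Cs ! length Cs \<noteq> {}"
      using proper(3,5,6) by (auto simp: nth_append)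
    show "?Cs ! length Cs \<inter> ?Cs ! k \<subseteq> ?Cs ! a" if "k < length ?Cs" "k \<noteq> length Cs" for k
      using that proper(3,6) v nth_mem[of k Cs] by (auto simp: nth_append)
  qed (use proper(3) in auto)
  then show ?thesis using proper(1,2) nonempty by simp
next
  case (full a v)
  have "v \<notin> \<Union>(set Cs)" using full(4) by blast
  then have "clique_forest (Cs[a := Cs ! a \<union> {v}]) E"
    using clique_forest_update_new_vertex[OF cf _ full(3)] by blast
  moreover have "{} \<notin> set (Cs[a := Cs ! a \<union> {v}])"
    using nonempty set_update_subset_insert[of Cs a "Cs ! a \<union> {v}"] by auto
  ultimately show ?thesis using full(1,2) by simp
next
  case (empty a v)
  have v: "v \<notin> \<Union>(set Cs)" using empty(4) by blast
  have "Cs ! a \<noteq> {}" using nonempty nth_mem[OF empty(3)] by metis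
  then have "{} \<subset> Cs ! a" by blast
  then have "clique_forest (Cs @ [{} \<union> {v}]) E"
    by (rule clique_forest_append_new_vertex[OF cf v _ nth_mem[OF empty(3)]])
  then show ?thesis using empty(1,2) nonempty by simp
qed

theorem corollary14:
  fixes p :: nat and Cs0 Cs :: "nat set list" and E0 E :: "nat set set"
  assumes "Cs0 \<noteq> []"
    and "\<forall>C\<in>set Cs0. C \<noteq> {} \<and> C \<subseteq> {1..p}"
    and "perfect_sequence Cs0"
    and "clique_forest Cs0 E0"
    and "(step p)\<^sup>*\<^sup>* (Cs0, E0) (Cs, E)"
    and "{1..p} - \<Union>(set Cs) = {}"
  shows "clique_forest Cs E"
proof -
  have "clique_forest Cs E \<and> {} \<notin> set Cs"
    using assms(5)
  proof (induction rule: rtranclp_induct2)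
    case refl
    show ?case using assms(2,4) by blast
  next
    case (step Cs E Cs' E')
    then show ?case using step_preserves_clique_forest[OF step.hyps(2)] by blast
  qed
  then show ?thesis ..
qed

end
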